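(* Let $S>0$, let $D$ be a multiset of $n$ items with sizes in $(0,S]$, let $k\ge 1$ be an integer and $\epsilon\in(0,1/2]$. Consider the following algorithm. (1) Call an item small if its size is at most $\max\{1/n,\epsilon\}\cdot S$ and large otherwise; let $I$, $J$ be the multisets of small and large items. (2) Sort $J$ in non-increasing order of size and partition it into consecutive groups of $g=\lceil n(J)\epsilon^2\rceil$ items (the last group possibly smaller), where $n(J)=|J|$; round each item up to the largest size in its group; let $U'$ be the first group (the $g$ largest items) and $U''$ the instance formed by the remaining rounded items. (3) Put each of the $k$ copies of each item of $U'$ into its own bin. (4) Compute a feasible solution $\mathbf{x}$ of the fractional configuration linear program $F_k$ of $U''$ with $\mathbf{1}\cdot\mathbf{x}\le LIN(U''_k)+1$, and from it construct a $k$-times bin packing of $U''$ using at most $\mathbf{1}\cdot\mathbf{x}+\frac{m(U'')+k}{2}$ bins. (5) Replace each rounded item by its original item, obtaining a $k$-times bin packing of $J$. (6) Insert the $k$ copies of each small item one at a time, each into some existing bin where it fits and which contains no copy of the same item, opening a new bin only if no such bin exists. Then the number $bins(D_k)$ of bins produced satisfies $$bins(D_k)\le(1+2k\epsilon)\,OPT(D_k)+\frac{1}{2\epsilon^2}+(2k+1).$$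
   Context: For a multiset $D$ of items with sizes in $(0,S]$ and integer $k\ge1$, $D_k$ is the collection of $k$ copies of each item; a $k$-times bin packing assigns all copies to bins with total size at most $S$ per bin and no two copies of the same item in one bin; $OPT(D_k)$ is the minimum number of bins. For an instance $W$ with distinct sizes $c[1],\dots,c[m]$ ($m=m(W)$) occurring $n[1],\dots,n[m]$ times, a configuration is a vector $a\in\mathbb{Z}_{\ge0}^m$ with $a_i\le n[i]$ and $\sum_i a_ic[i]\le S$; let $A$ be the $m\times t$ matrix whose columns are all configurations and $\mathbf{n}=(n[1],\dots,n[m])$. The fractional configuration program $F_k$ of $W$ is: minimize $\mathbf{1}\cdot\mathbf{x}$ subject to $A\mathbf{x}=k\mathbf{n}$, $\mathbf{x}\in\mathbb{R}^t_{\ge0}$; its optimal value is $LIN(W_k)$. *)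

theory Defs
  imports Complex_Main
begin

text \<open>Items are identified by natural-number indices; an instance is a finite index
set I together with a size function s. A bin is a set of item indices (so no two
copies of the same item share a bin).\<close>

definition kpacking :: "real \<Rightarrow> (nat \<Rightarrow> real) \<Rightarrow> nat set \<Rightarrow> nat \<Rightarrow> nat set list \<Rightarrow> bool" where
  "kpacking S s I k B \<longleftrightarrow>
     (\<forall>b\<in>set B. b \<subseteq> I \<and> (\<Sum>i\<in>b. s i) \<le> S) \<and>
     (\<forall>i\<in>I. length (filter (\<lambda>b. i \<in> b) B) = k)"

definition OPT :: "real \<Rightarrow> (nat \<Rightarrow> real) \<Rightarrow> nat set \<Rightarrow> nat \<Rightarrow> nat" where
  "OPT S s I k = (LEAST m. \<exists>B. kpacking S s I k B \<and> length B = m)"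

definition mult :: "(nat \<Rightarrow> real) \<Rightarrow> nat set \<Rightarrow> real \<Rightarrow> nat" where
  "mult s I c = card {i\<in>I. s i = c}"

definition configs :: "real \<Rightarrow> (nat \<Rightarrow> real) \<Rightarrow> nat set \<Rightarrow> (real \<Rightarrow> nat) set" where
  "configs S s I = {a. (\<forall>c. c \<notin> s ` I \<longrightarrow> a c = 0) \<and>
                       (\<forall>c\<in>s ` I. a c \<le> mult s I c) \<and>
                       (\<Sum>c\<in>s ` I. real (a c) * c) \<le> S}"

definition lp_feasible :: "real \<Rightarrow> (nat \<Rightarrow> real) \<Rightarrow> nat set \<Rightarrow> nat \<Rightarrow> ((real \<Rightarrow> nat) \<Rightarrow> real) \<Rightarrow> bool" where
  "lp_feasible S s I k x \<longleftrightarrow>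
     (\<forall>a\<in>configs S s I. 0 \<le> x a) \<and>
     (\<forall>c\<in>s ` I. (\<Sum>a\<in>configs S s I. x a * real (a c)) = real k * real (mult s I c))"

definition LIN :: "real \<Rightarrow> (nat \<Rightarrow> real) \<Rightarrow> nat set \<Rightarrow> nat \<Rightarrow> real" where
  "LIN S s I k = Inf {(\<Sum>a\<in>configs S s I. x a) | x. lp_feasible S s I k x}"

definition fits :: "real \<Rightarrow> (nat \<Rightarrow> real) \<Rightarrow> nat \<Rightarrow> nat set \<Rightarrow> bool" where
  "fits S s i b \<longleftrightarrow> i \<notin> b \<and> (\<Sum>j\<in>b. s j) + s i \<le> S"

definition insert_step :: "real \<Rightarrow> (nat \<Rightarrow> real) \<Rightarrow> nat \<Rightarrow> nat set list \<Rightarrow> nat set list \<Rightarrow> bool" where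
  "insert_step S s i B B' \<longleftrightarrow>
     (\<exists>j<length B. fits S s i (B ! j) \<and> B' = B[j := insert i (B ! j)]) \<or>
     ((\<forall>b\<in>set B. \<not> fits S s i b) \<and> B' = B @ [{i}])"

fun insert_run :: "real \<Rightarrow> (nat \<Rightarrow> real) \<Rightarrow> nat list \<Rightarrow> nat set list \<Rightarrow> nat set list \<Rightarrow> bool" where
  "insert_run S s [] B B' = (B' = B)"
| "insert_run S s (i # is) B B' = (\<exists>B1. insert_step S s i B B1 \<and> insert_run S s is B1 B')"

end

theory Submission
  imports Defs
begin

text \<open>An optimal packing has total capacity at least k times the total size T of D. Every
large item exceeds \<epsilon>S, so k |J| \<epsilon> \<le> OPT, and the k g \<le> k (|J| \<epsilon>^2 + 1) singleton bins used for U'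
cost at most \<epsilon> OPT + k. Shifting the rounded items of U'' one group to the left makes each
of them no larger than a distinct original large item, so every k-times packing of D induces one
of U'' with as many bins; hence LIN(U''_k) \<le> OPT, and U'' has at most 1/\<epsilon>^2 distinct sizes.
When step 6 opens a bin for a copy of a small item i, every bin without i is filled beyond
S - s(i), while these bins together hold at most k (T - s(i)) of size. For s(i) \<le> \<epsilon>S this
leaves at most (1 + 2\<epsilon>) OPT such bins, and for s(i) \<le> S/n at most OPT + k.\<close>

definition copies :: "nat \<Rightarrow> nat set list \<Rightarrow> nat" where
  "copies j B = length (filter (\<lambda>b. j \<in> b) B)"

lemma copies_Nil [simp]: "copies j [] = 0"
  and copies_Cons [simp]: "copies j (b # B) = (if j \<in> b then Suc (copies j B) else copies j B)"
  and copies_append [simp]: "copies j (B @ C) = copies j B + copies j C"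
  by (simp_all add: copies_def)

lemma copies_list_update:
  "p < length B \<Longrightarrow>
   copies j (B[p := b]) + (if j \<in> B ! p then 1 else 0) = copies j B + (if j \<in> b then 1 else 0)"
proof (induction B arbitrary: p)
  case (Cons c B)
  then show ?case by (cases p) auto
qed simp

lemma copies_concat_replicate_singletons:
  "distinct xs \<Longrightarrow> copies j (concat (map (\<lambda>i. replicate k {i}) xs)) = (if j \<in> set xs then k else 0)"
proof (induction xs)
  case (Cons x xs)
  have "copies j (replicate k {x}) = (if j = x then k else 0)"
    by (induction k) auto
  with Cons show ?case by auto
qed simp

lemma copies_map_image:
  assumes "inj_on f A" "\<forall>b\<in>set B. b \<subseteq> A" "p \<in> A"
  shows "copies (f p) (map ((`) f) B) = copies p B"
  using assms(2) by (induction B) (auto simp: inj_on_image_mem_iff[OF assms(1)] assms(3))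

lemma copies_map_image_outside:
  "\<forall>b\<in>set B. b \<subseteq> A \<Longrightarrow> j \<notin> f ` A \<Longrightarrow> copies j (map ((`) f) B) = 0"
  by (induction B) auto

lemma copies_filter_le: "copies j (filter P B) \<le> copies j B"
  by (induction B) auto

lemma copies_eq_0: "\<forall>b\<in>set B. j \<notin> b \<Longrightarrow> copies j B = 0"
  by (simp add: copies_def filter_False)

lemma count_list_concat_replicate:
  "distinct xs \<Longrightarrow> count_list (concat (map (\<lambda>i. replicate k i) xs)) j = (if j \<in> set xs then k else 0)"
proof (induction xs)
  case (Cons x xs)
  have "count_list (replicate k x) j = (if x = j then k else 0)"
    by (induction k) auto
  with Cons show ?case by auto
qed simp

lemma kpacking_iff_copies:
  "kpacking S s I k B \<longleftrightarrow> (\<forall>b\<in>set B. b \<subseteq> I \<and> sum s b \<le> S) \<and> (\<forall>i\<in>I. copies i B = k)"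
  by (simp add: kpacking_def copies_def)

lemma sum_list_bin_sums:
  fixes w :: "nat \<Rightarrow> 'a::comm_semiring_1"
  assumes "finite I" "\<forall>b\<in>set B. b \<subseteq> I"
  shows "(\<Sum>b\<leftarrow>B. sum w b) = (\<Sum>j\<in>I. w j * of_nat (copies j B))"
  using assms(2)
proof (induction B)
  case (Cons b B)
  have "sum w b = (\<Sum>j\<in>I. if j \<in> b then w j else 0)"
    using Cons.prems assms(1) by (simp add: sum.If_cases Int_absorb1)
  moreover have "(\<Sum>j\<in>I. w j * of_nat (copies j (b # B)))
      = (\<Sum>j\<in>I. (if j \<in> b then w j else 0) + w j * of_nat (copies j B))"
    by (rule sum.cong) (auto simp: algebra_simps)
  ultimately show ?case
    using Cons by (simp add: sum.distrib)
qed simp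

lemma kpacking_total_size:
  assumes "kpacking S s I k B" "finite I"
  shows "real k * sum s I \<le> real (length B) * S"
proof -
  have sub: "\<forall>b\<in>set B. b \<subseteq> I" and cp: "\<forall>i\<in>I. copies i B = k"
    and full: "\<forall>b\<in>set B. sum s b \<le> S"
    using assms(1) by (auto simp: kpacking_iff_copies)
  have "real k * sum s I = (\<Sum>j\<in>I. s j * real (copies j B))"
    using cp by (simp add: sum_distrib_left mult.commute)
  also have "\<dots> = (\<Sum>b\<leftarrow>B. sum s b)"
    by (rule sum_list_bin_sums[OF assms(2) sub, symmetric])
  also have "\<dots> \<le> (\<Sum>b\<leftarrow>B. S)"
    by (rule sum_list_mono) (use full in auto)
  finally show ?thesis by (simp add: sum_list_triv)
qed

lemma kpacking_exists:
  assumes "finite I" "\<forall>i\<in>I. s i \<le> S"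
  shows "\<exists>B. kpacking S s I k B"
proof
  let ?B = "concat (map (\<lambda>i. replicate k {i}) (sorted_list_of_set I))"
  show "kpacking S s I k ?B"
    using assms by (auto simp: kpacking_iff_copies copies_concat_replicate_singletons)
qed

lemma OPT_attained:
  assumes "finite I" "\<forall>i\<in>I. s i \<le> S"
  obtains B where "kpacking S s I k B" "length B = OPT S s I k"
  using LeastI_ex[of "\<lambda>m. \<exists>B. kpacking S s I k B \<and> length B = m"] kpacking_exists[OF assms]
  unfolding OPT_def by blast

lemma total_size_le_OPT:
  assumes "finite I" "\<forall>i\<in>I. s i \<le> S"
  shows "real k * sum s I \<le> real (OPT S s I k) * S"
  by (metis OPT_attained[OF assms] kpacking_total_size assms(1))

lemma configs_finite:
  assumes "finite I"
  shows "finite (configs S s I)"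
proof (rule finite_subset)
  show "configs S s I \<subseteq> {a. \<forall>c. (c \<in> s ` I \<longrightarrow> a c \<in> {0..card I}) \<and> (c \<notin> s ` I \<longrightarrow> a c = 0)}"
  proof (intro subsetI CollectI allI conjI impI)
    fix a c assume "a \<in> configs S s I" and "c \<in> s ` I"
    then have "a c \<le> mult s I c" by (auto simp: configs_def)
    also have "\<dots> \<le> card I" unfolding mult_def using assms by (intro card_mono) auto
    finally show "a c \<in> {0..card I}" by simp
  next
    fix a c assume "a \<in> configs S s I" and "c \<notin> s ` I"
    then show "a c = 0" by (simp add: configs_def)
  qed
  show "finite {a. \<forall>c. (c \<in> s ` I \<longrightarrow> a c \<in> {0..card I}) \<and> (c \<notin> s ` I \<longrightarrow> (a c::nat) = 0)}"
    by (rule finite_set_of_finite_funs) (use assms in auto)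
qed

definition bin_config :: "(nat \<Rightarrow> real) \<Rightarrow> nat set \<Rightarrow> nat set \<Rightarrow> real \<Rightarrow> nat" where
  "bin_config s I b c = (if c \<in> s ` I then card {p\<in>b. s p = c} else 0)"

lemma bin_config_in_configs:
  assumes "finite I" "b \<subseteq> I" "sum s b \<le> S"
  shows "bin_config s I b \<in> configs S s I"
proof -
  have fb: "finite b" using assms(1,2) finite_subset by blast
  have "(\<Sum>c\<in>s ` I. real (bin_config s I b c) * c) = (\<Sum>c\<in>s ` I. \<Sum>p\<in>{p\<in>b. s p = c}. s p)"
    by (rule sum.cong) (auto simp: bin_config_def)
  also have "\<dots> = (\<Sum>c\<in>s ` b. \<Sum>p\<in>{p\<in>b. s p = c}. s p)"
  proof (rule sum.mono_neutral_right)
    show "\<forall>c\<in>s ` I - s ` b. (\<Sum>p\<in>{p\<in>b. s p = c}. s p) = 0"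
      by (metis (mono_tags, lifting) Diff_iff empty_Collect_eq image_eqI sum.empty)
  qed (use assms(1,2) in auto)
  also have "\<dots> = sum s b"
    using fb by (rule sum.image_gen[symmetric])
  finally have "(\<Sum>c\<in>s ` I. real (bin_config s I b c) * c) \<le> S"
    using assms(3) by simp
  moreover have "bin_config s I b c \<le> mult s I c" if "c \<in> s ` I" for c
    unfolding bin_config_def mult_def using that assms(1,2) by (auto intro!: card_mono)
  ultimately show ?thesis by (auto simp: configs_def bin_config_def)
qed

lemma sum_list_map_eq_sum_of_count:
  fixes h :: "'a \<Rightarrow> 'b::semiring_1"
  assumes "finite A" "set xs \<subseteq> A"
  shows "(\<Sum>x\<leftarrow>xs. h x) = (\<Sum>a\<in>A. of_nat (count_list xs a) * h a)"
  using assms(2)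
proof (induction xs)
  case (Cons y xs)
  have "(\<Sum>a\<in>A. of_nat (count_list (y # xs) a) * h a)
      = (\<Sum>a\<in>A. (if y = a then h a else 0) + of_nat (count_list xs a) * h a)"
    by (rule sum.cong) (auto simp: distrib_right)
  with Cons assms(1) show ?case by (simp add: sum.distrib)
qed simp

lemma lp_feasible_kpacking:
  assumes "finite I" "kpacking S s I k P"
  shows "lp_feasible S s I k (\<lambda>a. real (count_list (map (bin_config s I) P) a))"
  unfolding lp_feasible_def
proof (intro conjI ballI)
  fix c assume c: "c \<in> s ` I"
  have sub: "\<forall>b\<in>set P. b \<subseteq> I" and cp: "\<forall>i\<in>I. copies i P = k"
    using assms(2) by (auto simp: kpacking_iff_copies)
  have cfg: "set (map (bin_config s I) P) \<subseteq> configs S s I"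
    using assms by (auto simp: kpacking_iff_copies intro: bin_config_in_configs)
  have card_eq: "real (bin_config s I b c) = (\<Sum>j\<in>b. if s j = c then 1 else 0)" if "b \<in> set P" for b
    using c sub that assms(1) finite_subset
    by (fastforce simp: bin_config_def sum.If_cases Int_def conj_commute)
  have "(\<Sum>a\<in>configs S s I. real (count_list (map (bin_config s I) P) a) * real (a c))
      = (\<Sum>b\<leftarrow>P. real (bin_config s I b c))"
    using sum_list_map_eq_sum_of_count[OF configs_finite[OF assms(1)] cfg, of "\<lambda>a. real (a c)", symmetric]
    by (simp add: o_def)
  also have "\<dots> = (\<Sum>b\<leftarrow>P. \<Sum>j\<in>b. if s j = c then 1 else 0)"
    using card_eq by (metis (no_types, lifting) map_eq_conv)
  also have "\<dots> = (\<Sum>j\<in>I. (if s j = c then 1 else 0) * real (copies j P))"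
    by (rule sum_list_bin_sums[OF assms(1) sub])
  also have "\<dots> = (\<Sum>j\<in>I. if s j = c then real k else 0)"
    using cp by (intro sum.cong) auto
  also have "\<dots> = real k * real (mult s I c)"
    using assms(1) by (simp add: sum.If_cases mult_def Int_def)
  finally show "(\<Sum>a\<in>configs S s I. real (count_list (map (bin_config s I) P) a) * real (a c))
      = real k * real (mult s I c)" .
qed simp

lemma LIN_le_length:
  assumes "finite I" "kpacking S s I k P"
  shows "LIN S s I k \<le> real (length P)"
proof -
  let ?x = "\<lambda>a. real (count_list (map (bin_config s I) P) a)"
  have cfg: "set (map (bin_config s I) P) \<subseteq> configs S s I"
    using assms by (auto simp: kpacking_iff_copies intro: bin_config_in_configs)
  have "LIN S s I k \<le> (\<Sum>a\<in>configs S s I. ?x a)"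
    unfolding LIN_def
  proof (rule cInf_lower)
    show "bdd_below {\<Sum>a\<in>configs S s I. x a |x. lp_feasible S s I k x}"
      by (rule bdd_belowI[of _ 0]) (auto simp: lp_feasible_def intro!: sum_nonneg)
  qed (use lp_feasible_kpacking[OF assms] in blast)
  also have "\<dots> = real (length P)"
    using sum_list_map_eq_sum_of_count[OF configs_finite[OF assms(1)] cfg, of "\<lambda>_. 1 :: real", symmetric]
    by (simp add: o_def sum_list_triv)
  finally show ?thesis .
qed

lemma kpacking_pullback:
  assumes "kpacking S s I k B" "finite I" "\<forall>i\<in>I. 0 \<le> s i"
    and "inj_on f U" "f ` U \<subseteq> I" "\<forall>p\<in>U. r p \<le> s (f p)"
  shows "kpacking S r U k (map (\<lambda>b. {p\<in>U. f p \<in> b}) B)"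
  unfolding kpacking_iff_copies
proof (rule conjI; intro ballI)
  fix b' assume "b' \<in> set (map (\<lambda>b. {p\<in>U. f p \<in> b}) B)"
  then obtain b where b: "b \<in> set B" and b': "b' = {p\<in>U. f p \<in> b}" by auto
  have bI: "b \<subseteq> I" and bS: "sum s b \<le> S" using assms(1) b by (auto simp: kpacking_iff_copies)
  have inj: "inj_on f b'" using assms(4) b' by (auto intro: inj_on_subset)
  have "sum r b' \<le> sum (s \<circ> f) b'"
    using assms(6) b' by (intro sum_mono) auto
  also have "\<dots> = sum s (f ` b')" by (rule sum.reindex[OF inj, symmetric])
  also have "\<dots> \<le> sum s b"
    using bI assms(2,3) b' by (intro sum_mono2) (auto intro: finite_subset)
  finally show "b' \<subseteq> U \<and> sum r b' \<le> S" using bS b' by auto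
next
  fix p assume "p \<in> U"
  then have "copies (f p) B = k" using assms(1,5) by (auto simp: kpacking_iff_copies)
  then show "copies p (map (\<lambda>b. {p\<in>U. f p \<in> b}) B) = k"
    using \<open>p \<in> U\<close> by (simp add: copies_def filter_map o_def)
qed

lemma LIN_le_OPT_dominated:
  assumes "finite I" "\<forall>i\<in>I. 0 \<le> s i \<and> s i \<le> S" "finite U"
    and "inj_on f U" "f ` U \<subseteq> I" "\<forall>p\<in>U. r p \<le> s (f p)"
  shows "LIN S r U k \<le> real (OPT S s I k)"
proof -
  obtain B where B: "kpacking S s I k B" "length B = OPT S s I k"
    using OPT_attained assms(1,2) by blast
  show ?thesis
    using LIN_le_length[OF assms(3) kpacking_pullback[OF B(1) assms(1) _ assms(4-6)]] assms(2) B(2)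
    by simp
qed

lemma large_items_le_OPT:
  assumes "finite I" "\<forall>i\<in>I. 0 \<le> d i \<and> d i \<le> S" "J \<subseteq> I" "\<forall>j\<in>J. c \<le> d j"
  shows "real k * (real (card J) * c) \<le> real (OPT S d I k) * S"
proof -
  have "real (card J) * c \<le> sum d J"
    using sum_bounded_below[of J c d] assms(4) by simp
  also have "\<dots> \<le> sum d I"
    using assms(1-3) by (intro sum_mono2) auto
  finally have "real k * (real (card J) * c) \<le> real k * sum d I"
    by (rule mult_left_mono) simp
  also have "\<dots> \<le> real (OPT S d I k) * S"
    using assms(2) by (intro total_size_le_OPT[OF assms(1)]) auto
  finally show ?thesis .
qed

lemma group_rounded_le_shifted:
  fixes d :: "'a \<Rightarrow> 'b::preorder"
  assumes "sorted_wrt (\<lambda>a b. d b \<le> d a) js" "0 < g" "g \<le> p" "p < length js"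
  shows "d (js ! (g * (p div g))) \<le> d (js ! (p - g))"
proof -
  have "p = g * (p div g) + p mod g" "p mod g < g"
    using assms(2) by simp_all
  then have lower: "p - g \<le> g * (p div g)"
    by linarith
  have upper: "g * (p div g) < length js"
    using assms(4) by (metis div_mult_mod_eq le_add1 mult.commute order.strict_trans1)
  show ?thesis
  proof (cases "p - g = g * (p div g)")
    case False
    then show ?thesis
      using sorted_wrt_nth_less[OF assms(1), of "p - g"] lower upper by simp
  qed simp
qed

lemma card_group_values: "card ((\<lambda>p. f (g * (p div g))) ` {g..<L}) * g \<le> L"
proof (cases "g = 0")
  case False
  have "card ((\<lambda>p. f (g * (p div g))) ` {g..<L}) = card ((\<lambda>q. f (g * q)) ` (\<lambda>p. p div g) ` {g..<L})"
    by (simp add: image_image)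
  also have "\<dots> \<le> card ((\<lambda>p. p div g) ` {g..<L})"
    by (rule card_image_le) simp
  also have "\<dots> \<le> card {1..(L - 1) div g}"
  proof (intro card_mono subsetI)
    fix q assume "q \<in> (\<lambda>p. p div g) ` {g..<L}"
    then obtain p where "g \<le> p" "p \<le> L - 1" "q = p div g" by auto
    then show "q \<in> {1..(L - 1) div g}"
      using False by (simp add: Suc_le_eq div_greater_zero_iff div_le_mono)
  qed simp
  finally have "card ((\<lambda>p. f (g * (p div g))) ` {g..<L}) * g \<le> (L - 1) div g * g"
    by simp
  also have "\<dots> \<le> L"
    by (meson div_times_less_eq_dividend diff_le_self le_trans)
  finally show ?thesis .
qed simp

lemma card_group_values_le:
  fixes L :: nat and \<epsilon> :: real
  assumes "0 < \<epsilon>"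
  defines "g \<equiv> nat \<lceil>real L * \<epsilon>^2\<rceil>"
  shows "real (card ((\<lambda>p. f (g * (p div g))) ` {g..<L})) \<le> 1 / \<epsilon>^2"
proof (cases "L = 0")
  case False
  let ?m = "real (card ((\<lambda>p. f (g * (p div g))) ` {g..<L}))"
  have "real L * (?m * \<epsilon>^2) \<le> ?m * real g"
    using mult_left_mono[OF real_nat_ceiling_ge[of "real L * \<epsilon>^2"], of ?m]
    by (simp add: g_def algebra_simps)
  also have "\<dots> \<le> real L * 1"
    using card_group_values[of f g L] by (metis mult_1_right of_nat_le_iff of_nat_mult)
  finally have "?m * \<epsilon>^2 \<le> 1"
    using False by (simp add: mult_le_cancel_left_pos)
  then show ?thesis
    using assms(1) by (simp add: le_divide_eq)
qed simp

text \<open>Linear grouping: the item at position p of U'' is rounded to the size at position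
g (p div g) \<ge> p - g, so it is no larger than the original item at position p - g.\<close>

lemma LIN_group_rounding_le_OPT:
  assumes "finite I" "\<forall>i\<in>I. 0 \<le> d i \<and> d i \<le> S" "distinct js" "set js \<subseteq> I"
    and "sorted_wrt (\<lambda>a b. d b \<le> d a) js" "0 < g"
  shows "LIN S (\<lambda>p. d (js ! (g * (p div g)))) {g..<length js} k \<le> real (OPT S d I k)"
proof (rule LIN_le_OPT_dominated[OF assms(1,2) finite_atLeastLessThan])
  show "inj_on (\<lambda>p. js ! (p - g)) {g..<length js}"
    by (auto intro!: inj_onI simp: nth_eq_iff_index_eq[OF assms(3)])
  show "(\<lambda>p. js ! (p - g)) ` {g..<length js} \<subseteq> I"
    by (auto intro!: subsetD[OF assms(4)] nth_mem)
  show "\<forall>p\<in>{g..<length js}. d (js ! (g * (p div g))) \<le> d (js ! (p - g))"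
    using group_rounded_le_shifted[OF assms(5,6)] by simp
qed

lemma rounding_phase_bins_le:
  fixes S \<epsilon> :: real and k :: nat and d :: "nat \<Rightarrow> real" and I :: "nat set"
    and js :: "nat list" and x :: "(real \<Rightarrow> nat) \<Rightarrow> real" and P :: "nat set list"
  assumes S_pos: "S > 0" and fin: "finite I" and sizes: "\<forall>i\<in>I. 0 < d i \<and> d i \<le> S"
    and k_ge: "k \<ge> 1" and eps_pos: "0 < \<epsilon>"
    and js_distinct: "distinct js" and js_set: "set js \<subseteq> I"
    and js_sorted: "sorted_wrt (\<lambda>a b. d b \<le> d a) js" and js_large: "\<forall>j\<in>set js. \<epsilon> * S < d j"
  defines "g \<equiv> nat \<lceil>real (length js) * \<epsilon>^2\<rceil>"
  defines "r \<equiv> (\<lambda>p. d (js ! (g * (p div g))))" and "U \<equiv> {g..<length js}"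
  assumes x_opt: "(\<Sum>a\<in>configs S r U. x a) \<le> LIN S r U k + 1"
    and P_len: "real (length P) \<le> (\<Sum>a\<in>configs S r U. x a) + (real (card (r ` U)) + real k) / 2"
  shows "real (k * min g (length js) + length P)
           \<le> (1 + 2 * real k * \<epsilon>) * real (OPT S d I k) + 1 / (2 * \<epsilon>^2) + (2 * real k + 1)"
proof -
  define L where "L = length js"
  define Opt where "Opt = real (OPT S d I k)"
  define m where "m = card (r ` U)"
  have sizes': "\<forall>i\<in>I. 0 \<le> d i \<and> d i \<le> S" using sizes by (auto intro: less_imp_le)
  have "real k * (real L * (\<epsilon> * S)) \<le> Opt * S"
    using large_items_le_OPT[OF fin sizes' js_set, of "\<epsilon> * S" k] js_large
      distinct_card[OF js_distinct]
    by (simp add: L_def Opt_def less_imp_le)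
  then have large_le: "real k * real L * \<epsilon> \<le> Opt"
    using S_pos by (simp add: mult.assoc)
  have g_ge: "real L * \<epsilon>^2 \<le> real g"
    unfolding g_def L_def by (rule real_nat_ceiling_ge)
  have g_le: "real g \<le> real L * \<epsilon>^2 + 1"
    unfolding g_def L_def by (simp add: of_nat_ceiling)
  have LIN_le: "LIN S r U k \<le> Opt"
  proof (cases "js = []")
    case True
    have "LIN S r U k \<le> real (length ([] :: nat set list))"
      by (rule LIN_le_length) (simp_all add: U_def kpacking_def True)
    then show ?thesis by (simp add: Opt_def)
  next
    case False
    then have "0 < g" using g_ge eps_pos by (simp add: L_def g_def)
    then show ?thesis
      unfolding r_def U_def Opt_def
      by (rule LIN_group_rounding_le_OPT[OF fin sizes' js_distinct js_set js_sorted])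
  qed
  have m_le: "real m \<le> 1 / \<epsilon>^2"
    using card_group_values_le[OF eps_pos, where L = "length js" and f = "\<lambda>p. d (js ! p)"]
    by (simp add: m_def r_def U_def g_def)
  have "real (k * min g L) \<le> real k * real g"
    by (simp add: mult_left_mono)
  also have "\<dots> \<le> real k * (real L * \<epsilon>^2 + 1)"
    using g_le by (simp add: mult_left_mono)
  also have "\<dots> = (real k * real L * \<epsilon>) * \<epsilon> + real k"
    by (simp add: algebra_simps power2_eq_square)
  also have "\<dots> \<le> \<epsilon> * Opt + real k"
    using large_le eps_pos by (simp add: mult.commute mult_left_mono)
  finally have first_group: "real (k * min g L) \<le> \<epsilon> * Opt + real k" .
  have rest: "real (length P) \<le> Opt + 1 + 1 / (2 * \<epsilon>^2) + real k / 2"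
    using P_len x_opt LIN_le m_le unfolding m_def by (simp add: field_simps)
  have "\<epsilon> * Opt \<le> 2 * real k * \<epsilon> * Opt"
    using k_ge eps_pos by (simp add: Opt_def mult_right_mono)
  then show ?thesis
    using first_group rest k_ge by (simp add: L_def Opt_def algebra_simps)
qed

lemma rounding_phase_copies:
  assumes js: "distinct js" and P_sub: "\<forall>b\<in>set P. b \<subseteq> {g..<length js}"
    and P_copies: "\<forall>q\<in>{g..<length js}. copies q P = k"
  defines "B \<equiv> concat (map (\<lambda>p. replicate k {js ! p}) [0..<min g (length js)])
                 @ map (\<lambda>b. (\<lambda>p. js ! p) ` b) P"
  shows "\<forall>b\<in>set B. b \<subseteq> set js" and "copies j B = (if j \<in> set js then k else 0)"
proof -
  define L where "L = length js"
  define Q where "Q = concat (map (\<lambda>p. replicate k {p}) [0..<min g L]) @ P"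
  have B_Q: "B = map ((`) ((!) js)) Q"
    by (simp add: B_def Q_def L_def map_concat o_def)
  have Q_sub: "\<forall>b\<in>set Q. b \<subseteq> {..<L}"
    using P_sub by (auto simp: Q_def L_def subset_iff)
  have Q_copies: "copies q Q = k" if "q < L" for q
  proof (cases "q < min g L")
    case True
    then have "copies q P = 0" using P_sub by (intro copies_eq_0) (force simp: subset_iff)
    with True show ?thesis by (simp add: Q_def copies_concat_replicate_singletons)
  next
    case False
    then show ?thesis
      using that P_copies by (simp add: Q_def copies_concat_replicate_singletons L_def)
  qed
  have inj: "inj_on ((!) js) {..<L}" by (rule inj_on_nth) (use js in \<open>auto simp: L_def\<close>)
  have image: "(!) js ` {..<L} = set js"
    by (simp add: L_def lessThan_atLeast0 atLeast0LessThan[symmetric] nth_image)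
  show "\<forall>b\<in>set B. b \<subseteq> set js"
    using Q_sub image by (auto simp: B_Q)
  show "copies j B = (if j \<in> set js then k else 0)"
  proof (cases "j \<in> set js")
    case True
    then obtain q where "q < L" "j = js ! q" by (auto simp: L_def in_set_conv_nth)
    then show ?thesis using True Q_copies copies_map_image[OF inj Q_sub] by (simp add: B_Q)
  next
    case False
    then show ?thesis using copies_map_image_outside[OF Q_sub] image by (simp add: B_Q)
  qed
qed

lemma insert_step_copies:
  assumes "insert_step S s i B B'"
  shows "copies j B' = copies j B + (if j = i then 1 else 0)"
  using assms unfolding insert_step_def
proof (elim disjE exE conjE)
  fix p assume "p < length B" "fits S s i (B ! p)" "B' = B[p := insert i (B ! p)]"
  then show ?thesis
    using copies_list_update[of p B j "insert i (B ! p)"] by (auto simp: fits_def split: if_splits)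
qed simp

lemma insert_step_bins_subset:
  assumes "insert_step S s i B B'" "i \<in> I" "\<forall>b\<in>set B. b \<subseteq> I"
  shows "\<forall>b\<in>set B'. b \<subseteq> I"
  using assms unfolding insert_step_def by (auto dest!: set_update_subset_insert[THEN subsetD])

lemma insert_step_length:
  "insert_step S s i B B' \<Longrightarrow>
   length B' = length B \<or> (\<forall>b\<in>set B. \<not> fits S s i b) \<and> length B' = Suc (length B)"
  by (auto simp: insert_step_def)

lemma insert_run_length_le:
  assumes "insert_run S s xs B B'" "\<forall>b\<in>set B. b \<subseteq> I"
    and "\<forall>j\<in>I. copies j B + count_list xs j = k" "set xs \<subseteq> A" "A \<subseteq> I" "real (length B) \<le> M"
    and new_bin: "\<And>C i. \<forall>b\<in>set C. b \<subseteq> I \<Longrightarrow> \<forall>j\<in>I. copies j C \<le> k \<Longrightarrow> i \<in> A \<Longrightarrow>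
      copies i C < k \<Longrightarrow> \<forall>b\<in>set C. \<not> fits S s i b \<Longrightarrow> real (length C) + 1 \<le> M"
  shows "real (length B') \<le> M"
  using assms(1-4,6)
proof (induction xs arbitrary: B)
  case (Cons i xs)
  obtain B1 where step: "insert_step S s i B B1" and run: "insert_run S s xs B1 B'"
    using Cons.prems(1) by auto
  have i: "i \<in> A" "i \<in> I" using Cons.prems(4) assms(5) by auto
  have "real (length B1) \<le> M"
    using insert_step_length[OF step]
  proof (elim disjE conjE)
    assume "\<forall>b\<in>set B. \<not> fits S s i b" "length B1 = Suc (length B)"
    moreover have "copies i B < k" "\<forall>j\<in>I. copies j B \<le> k"
      using Cons.prems(3) i(2) by force+
    ultimately show ?thesis
      using new_bin[OF Cons.prems(2) _ i(1)] by simp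
  qed (use Cons.prems(5) in simp)
  moreover have "\<forall>j\<in>I. copies j B1 + count_list xs j = k"
    using Cons.prems(3) insert_step_copies[OF step] by auto
  ultimately show ?case
    using Cons.IH[OF run insert_step_bins_subset[OF step i(2) Cons.prems(2)]] Cons.prems(4) by simp
qed simp

lemma rejecting_bins_size:
  assumes fin: "finite I" and sub: "\<forall>b\<in>set B. b \<subseteq> I" and cp: "\<forall>j\<in>I. copies j B \<le> k"
    and nonneg: "\<forall>j\<in>I. 0 \<le> s j" and i: "i \<in> I" and no_fit: "\<forall>b\<in>set B. \<not> fits S s i b"
    and nonempty: "filter (\<lambda>b. i \<notin> b) B \<noteq> []"
  shows "real (length (filter (\<lambda>b. i \<notin> b) B)) * (S - s i) < real k * (sum s I - s i)"
proof -
  let ?F = "filter (\<lambda>b. i \<notin> b) B"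
  have F_sub: "\<forall>b\<in>set ?F. b \<subseteq> I" using sub by simp
  have F_i: "copies i ?F = 0" by (simp add: copies_def filter_filter)
  have "real (length ?F) * (S - s i) = (\<Sum>b\<leftarrow>?F. S - s i)"
    by (simp add: sum_list_triv)
  also have "\<dots> < (\<Sum>b\<leftarrow>?F. sum s b)"
    using no_fit by (intro sum_list_strict_mono[OF nonempty]) (auto simp: fits_def)
  also have "\<dots> = (\<Sum>j\<in>I. s j * real (copies j ?F))"
    by (rule sum_list_bin_sums[OF fin F_sub])
  also have "\<dots> = (\<Sum>j\<in>I - {i}. s j * real (copies j ?F))"
    using sum.remove[OF fin i, of "\<lambda>j. s j * real (copies j ?F)"] F_i by simp
  also have "\<dots> \<le> (\<Sum>j\<in>I - {i}. s j * real k)"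
    using cp nonneg copies_filter_le order_trans
    by (intro sum_mono mult_left_mono) (simp_all, blast)
  also have "\<dots> = real k * (sum s I - s i)"
    using fin i by (simp add: sum_diff1 sum_distrib_left right_diff_distrib mult.commute)
  finally show ?thesis .
qed

lemma total_size_mult_le:
  assumes "finite I" "\<forall>j\<in>I. 0 \<le> s j \<and> s j \<le> S" "i \<in> I" "s i \<le> S / real (card I)"
  shows "sum s I * s i \<le> S * S"
proof -
  have "0 < card I" using assms(1,3) card_gt_0_iff by blast
  have "sum s I \<le> real (card I) * S"
    using sum_bounded_above[of I s S] assms(2) by auto
  then have "sum s I * s i \<le> (real (card I) * S) * (S / real (card I))"
    using assms(2-4) by (intro mult_mono) (auto intro: sum_nonneg)
  with \<open>0 < card I\<close> show ?thesis by simp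
qed

lemma rejecting_bins_le:
  assumes S_pos: "S > 0" and fin: "finite I" and sizes: "\<forall>j\<in>I. 0 < s j \<and> s j \<le> S"
    and eps_pos: "0 < \<epsilon>" and eps_le: "\<epsilon> \<le> 1/2"
    and i: "i \<in> I" and small: "s i \<le> max (1 / real (card I)) \<epsilon> * S"
    and sub: "\<forall>b\<in>set B. b \<subseteq> I" and cp: "\<forall>j\<in>I. copies j B \<le> k"
    and no_fit: "\<forall>b\<in>set B. \<not> fits S s i b" and volume: "real k * sum s I \<le> real m * S"
  shows "real (length (filter (\<lambda>b. i \<notin> b) B)) \<le> (1 + 2 * \<epsilon>) * real m + real k"
proof (cases "filter (\<lambda>b. i \<notin> b) B = []")
  case True
  then show ?thesis using eps_pos by simp
next
  case False
  define f where "f = real (length (filter (\<lambda>b. i \<notin> b) B))"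
  have lt: "f * (S - s i) < real k * (sum s I - s i)"
    unfolding f_def using sizes by (intro rejecting_bins_size[OF fin sub cp _ i no_fit False]) auto
  have si: "0 < s i" "s i \<le> S" using sizes i by auto
  show ?thesis
  proof (cases "s i \<le> \<epsilon> * S")
    case True
    have "f * ((1 - \<epsilon>) * S) \<le> f * (S - s i)"
      using True by (intro mult_left_mono) (auto simp: f_def algebra_simps)
    also have "\<dots> < real k * (sum s I - s i)" by (fact lt)
    also have "\<dots> \<le> real m * S"
      using volume si by (smt (verit) mult_left_mono of_nat_0_le_iff)
    finally have f_le: "f * (1 - \<epsilon>) \<le> real m"
      using S_pos by (simp add: mult.assoc)
    have "1 \<le> (1 - \<epsilon>) * (1 + 2 * \<epsilon>)"
      using mult_nonneg_nonneg[of \<epsilon> "1 - 2 * \<epsilon>"] eps_pos eps_le by (simp add: algebra_simps)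
    then have "f \<le> (f * (1 - \<epsilon>)) * (1 + 2 * \<epsilon>)"
      using mult_left_mono[of 1 _ f] by (simp add: f_def mult.assoc)
    also have "\<dots> \<le> real m * (1 + 2 * \<epsilon>)"
      using f_le eps_pos by (intro mult_right_mono) auto
    finally show ?thesis by (simp add: f_def mult.commute)
  next
    case False
    then have "s i \<le> S / real (card I)" using small by (simp add: max_def split: if_splits)
    then have "sum s I * s i \<le> S * S"
      using sizes by (intro total_size_mult_le[OF fin _ i]) auto
    then have "real k * (sum s I - s i) \<le> (real k * sum s I / S + real k) * (S - s i)"
      using S_pos mult_left_mono[of "sum s I * s i" "S * S" "real k"] by (simp add: field_simps)
    with lt have "f < real k * sum s I / S + real k"
      using si by (metis diff_ge_0_iff_ge mult_right_less_imp_less order_less_le_trans)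
    also have "\<dots> \<le> real m + real k"
      using volume S_pos by (simp add: pos_divide_le_eq)
    also have "\<dots> \<le> (1 + 2 * \<epsilon>) * real m + real k"
      using eps_pos by (simp add: distrib_right)
    finally show ?thesis by (simp add: f_def)
  qed
qed

lemma insertion_phase_bins_le:
  assumes run: "insert_run S s xs B B'"
    and S_pos: "S > 0" and fin: "finite I" and sizes: "\<forall>j\<in>I. 0 < s j \<and> s j \<le> S"
    and eps_pos: "0 < \<epsilon>" and eps_le: "\<epsilon> \<le> 1/2"
    and sub: "\<forall>b\<in>set B. b \<subseteq> I" and cp: "\<forall>j\<in>I. copies j B + count_list xs j = k"
    and xs_sub: "set xs \<subseteq> I" and xs_small: "\<forall>i\<in>set xs. s i \<le> max (1 / real (card I)) \<epsilon> * S"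
    and B_le: "real (length B) \<le> M" and M_ge: "(1 + 2 * \<epsilon>) * real (OPT S s I k) + 2 * real k \<le> M"
  shows "real (length B') \<le> M"
proof (rule insert_run_length_le[OF run sub cp order_refl xs_sub B_le])
  fix C i
  assume C: "\<forall>b\<in>set C. b \<subseteq> I" "\<forall>j\<in>I. copies j C \<le> k" and i: "i \<in> set xs"
    and "copies i C < k" and no_fit: "\<forall>b\<in>set C. \<not> fits S s i b"
  have "length C = copies i C + length (filter (\<lambda>b. i \<notin> b) C)"
    unfolding copies_def by (rule sum_length_filter_compl[symmetric])
  moreover have "real (length (filter (\<lambda>b. i \<notin> b) C)) \<le> (1 + 2 * \<epsilon>) * real (OPT S s I k) + real k"
    using i xs_sub xs_small sizes
    by (intro rejecting_bins_le[OF S_pos fin sizes eps_pos eps_le _ _ C no_fit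
          total_size_le_OPT[OF fin]]) auto
  ultimately show "real (length C) + 1 \<le> M"
    using \<open>copies i C < k\<close> M_ge by linarith
qed

theorem theorem5:
  fixes S \<epsilon> :: real and n k :: nat and d :: "nat \<Rightarrow> real"
    and js smalls :: "nat list" and x :: "(real \<Rightarrow> nat) \<Rightarrow> real"
    and P2 Bf :: "nat set list"
  assumes S_pos: "S > 0" and n_pos: "n > 0"
    and sizes: "\<forall>i<n. 0 < d i \<and> d i \<le> S"
    and k_ge: "k \<ge> 1" and eps_pos: "0 < \<epsilon>" and eps_le: "\<epsilon> \<le> 1/2"
  defines "Sm \<equiv> {i. i < n \<and> d i \<le> max (1 / real n) \<epsilon> * S}"
    and "Lg \<equiv> {i. i < n \<and> \<not> d i \<le> max (1 / real n) \<epsilon> * S}"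
  assumes js_distinct: "distinct js" and js_set: "set js = Lg"
    and js_sorted: "sorted_wrt (\<lambda>a b. d b \<le> d a) js"
  defines "g \<equiv> nat \<lceil>real (length js) * \<epsilon>^2\<rceil>"
  defines "r \<equiv> (\<lambda>p. d (js ! (g * (p div g))))"
    and "U2 \<equiv> {g..<length js}"
  assumes x_feas: "lp_feasible S r U2 k x"
    and x_opt: "(\<Sum>a\<in>configs S r U2. x a) \<le> LIN S r U2 k + 1"
    and P2_pack: "kpacking S r U2 k P2"
    and P2_len: "real (length P2) \<le> (\<Sum>a\<in>configs S r U2. x a) + (real (card (r ` U2)) + real k) / 2"
  defines "B0 \<equiv> concat (map (\<lambda>p. replicate k {js ! p}) [0..<min g (length js)])
                 @ map (\<lambda>b. (\<lambda>p. js ! p) ` b) P2"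
  assumes smalls_distinct: "distinct smalls" and smalls_set: "set smalls = Sm"
    and run: "insert_run S d (concat (map (\<lambda>i. replicate k i) smalls)) B0 Bf"
  shows "real (length Bf) \<le> (1 + 2 * real k * \<epsilon>) * real (OPT S d {..<n} k)
           + 1 / (2 * \<epsilon>^2) + (2 * real k + 1)"
proof -
  define Opt where "Opt = OPT S d {..<n} k"
  define RHS where "RHS = (1 + 2 * real k * \<epsilon>) * real Opt + 1 / (2 * \<epsilon>^2) + (2 * real k + 1)"
  have fin: "finite {..<n}" and sizes': "\<forall>i\<in>{..<n}. 0 < d i \<and> d i \<le> S"
    using sizes by auto
  have P2: "\<forall>b\<in>set P2. b \<subseteq> {g..<length js}" "\<forall>q\<in>{g..<length js}. copies q P2 = k"
    using P2_pack by (auto simp: kpacking_iff_copies U2_def)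
  note B0 = rounding_phase_copies[OF js_distinct P2, folded B0_def, unfolded js_set]
  have "\<epsilon> * S \<le> max (1 / real n) \<epsilon> * S" using S_pos by (intro mult_right_mono) auto
  then have large: "\<forall>j\<in>Lg. \<epsilon> * S < d j" by (auto simp: Lg_def)
  have "real (k * min g (length js) + length P2) \<le> RHS"
    unfolding RHS_def Opt_def
    by (rule rounding_phase_bins_le[OF S_pos fin sizes' k_ge eps_pos js_distinct _ js_sorted,
          folded g_def, folded r_def U2_def, OF _ _ x_opt P2_len])
      (use large in \<open>auto simp: js_set Lg_def\<close>)
  then have B0_le: "real (length B0) \<le> RHS"
    by (simp add: B0_def length_concat sum_list_triv o_def mult.commute)
  have xs: "count_list (concat (map (\<lambda>i. replicate k i) smalls)) j = (if j \<in> Sm then k else 0)"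
    for j
    using count_list_concat_replicate[OF smalls_distinct] smalls_set by simp
  have "(1 + 2 * \<epsilon>) * real Opt \<le> (1 + 2 * real k * \<epsilon>) * real Opt"
    using k_ge eps_pos by (intro mult_right_mono) auto
  moreover have "0 \<le> 1 / (2 * \<epsilon>^2)" by simp
  ultimately have M_ge: "(1 + 2 * \<epsilon>) * real Opt + 2 * real k \<le> RHS"
    unfolding RHS_def by linarith
  have "real (length Bf) \<le> RHS"
    using B0 xs k_ge
    by (intro insertion_phase_bins_le[OF run S_pos fin sizes' eps_pos eps_le _ _ _ _
          B0_le M_ge[unfolded Opt_def]])
      (auto simp: Sm_def Lg_def smalls_set)
  then show ?thesis by (simp add: RHS_def Opt_def)
qed

end
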